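(* Let $(\beta,\gamma)$ be antiferromagnetic and $\lambda,\lambda_1,\lambda_2>0$. Let $G=(V,E)$ be a graph and $S\subseteq V$. For $i\in\{1,2\}$ let $\boldsymbol{\lambda}_i$ be the field vector on $V$ in which every $v\in S$ has field $\lambda_i$ and every $v\in V\setminus S$ has field $\lambda$, and let $\mu_i=\mu_{G;\beta,\gamma,\boldsymbol{\lambda}_i}$. Then for every $v\in V$, $$\big|\mathbf{E}_{\sigma\sim\mu_2}[\sigma(v)]-\mathbf{E}_{\sigma\sim\mu_1}[\sigma(v)]\big|\leq 2|S|\,\Big|\frac{\lambda_2}{\lambda_1}-1\Big|.$$
   Context: A pair $(\beta,\gamma)$ with $\beta,\gamma\geq0$ is antiferromagnetic if $\beta\gamma\in[0,1)$ and at least one is nonzero. For a graph $G=(V,E)$ and a field vector $\boldsymbol{\lambda}=(\lambda_v)_{v\in V}$ of positive reals, $\mu_{G;\beta,\gamma,\boldsymbol{\lambda}}(\sigma)=w(\sigma)/Z$ for $\sigma:V\to\{0,1\}$, where $w(\sigma)=\beta^{m_0(\sigma)}\gamma^{m_1(\sigma)}\prod_{v:\sigma(v)=1}\lambda_v$, $m_0,m_1$ are the numbers of edges with both endpoints spin $0$, resp. spin $1$ (convention $0^0=1$), and $Z=\sum_\sigma w(\sigma)$. *)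

theory Defs
  imports "HOL-Analysis.Analysis"
begin

definition graph :: "'a set \<Rightarrow> 'a set set \<Rightarrow> bool" where
  "graph V E \<longleftrightarrow> finite V \<and> (\<forall>e\<in>E. e \<subseteq> V \<and> card e = 2)"

definition antiferro :: "real \<Rightarrow> real \<Rightarrow> bool" where
  "antiferro \<beta> \<gamma> \<longleftrightarrow> \<beta> \<ge> 0 \<and> \<gamma> \<ge> 0 \<and> \<beta> * \<gamma> < 1 \<and> (\<beta> \<noteq> 0 \<or> \<gamma> \<noteq> 0)"

definition configs :: "'a set \<Rightarrow> ('a \<Rightarrow> nat) set" where
  "configs V = PiE V (\<lambda>_. {0, 1})"

definition mono_edges :: "'a set set \<Rightarrow> ('a \<Rightarrow> nat) \<Rightarrow> nat \<Rightarrow> nat" where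
  "mono_edges E \<sigma> s = card {e\<in>E. \<forall>u\<in>e. \<sigma> u = s}"

text \<open>Weight w(sigma); powers are natural-number powers, so 0^0 = 1.\<close>
definition spin_weight ::
  "'a set \<Rightarrow> 'a set set \<Rightarrow> real \<Rightarrow> real \<Rightarrow> ('a \<Rightarrow> real) \<Rightarrow> ('a \<Rightarrow> nat) \<Rightarrow> real" where
  "spin_weight V E \<beta> \<gamma> lam \<sigma> =
     \<beta> ^ mono_edges E \<sigma> 0 * \<gamma> ^ mono_edges E \<sigma> 1 * (\<Prod>v\<in>{v\<in>V. \<sigma> v = 1}. lam v)"

definition partition_fn :: "'a set \<Rightarrow> 'a set set \<Rightarrow> real \<Rightarrow> real \<Rightarrow> ('a \<Rightarrow> real) \<Rightarrow> real" where
  "partition_fn V E \<beta> \<gamma> lam = (\<Sum>\<sigma>\<in>configs V. spin_weight V E \<beta> \<gamma> lam \<sigma>)"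

definition gibbs :: "'a set \<Rightarrow> 'a set set \<Rightarrow> real \<Rightarrow> real \<Rightarrow> ('a \<Rightarrow> real) \<Rightarrow> ('a \<Rightarrow> nat) \<Rightarrow> real" where
  "gibbs V E \<beta> \<gamma> lam \<sigma> = spin_weight V E \<beta> \<gamma> lam \<sigma> / partition_fn V E \<beta> \<gamma> lam"

definition spin_expect :: "'a set \<Rightarrow> 'a set set \<Rightarrow> real \<Rightarrow> real \<Rightarrow> ('a \<Rightarrow> real) \<Rightarrow> 'a \<Rightarrow> real" where
  "spin_expect V E \<beta> \<gamma> lam v = (\<Sum>\<sigma>\<in>configs V. gibbs V E \<beta> \<gamma> lam \<sigma> * real (\<sigma> v))"

end

theory Submission
  imports Defs
begin

text \<open>Raising the field from \<open>lam\<^sub>1\<close> to \<open>lam\<^sub>2\<close> on \<open>S\<close> multiplies the weight of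
  \<open>\<sigma>\<close> by \<open>h \<sigma> = r ^ k\<close>, where \<open>r = lam\<^sub>2 / lam\<^sub>1\<close> and \<open>k\<close> is the number of spin-1 vertices
  of \<open>\<sigma>\<close> in \<open>S\<close>. As \<open>0 \<le> k \<le> |S|\<close>, any two values of \<open>h\<close> have ratio at least
  \<open>q = min r (1/r) ^ |S|\<close>. Reweighting a probability measure by such an \<open>h\<close> moves the mean
  of a \<open>[0,1]\<close>-valued function by at most \<open>1 - q\<close>, and \<open>1 - q \<le> |S| \<bar>r - 1\<bar>\<close> by
  Bernoulli's inequality. No property of
  the interaction beyond nonnegativity of the weights is used.\<close>

definition weighted_mean :: "'c set \<Rightarrow> ('c \<Rightarrow> real) \<Rightarrow> ('c \<Rightarrow> real) \<Rightarrow> real" where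
  "weighted_mean C w f = (\<Sum>s\<in>C. w s * f s) / sum w C"

lemma weighted_mean_diff_le:
  fixes a b f :: "'c \<Rightarrow> real" and q :: real
  assumes "finite C"
    and a_nonneg: "\<And>s. s \<in> C \<Longrightarrow> a s \<ge> 0" and "sum a C > 0" and "sum b C > 0"
    and f_range: "\<And>s. s \<in> C \<Longrightarrow> 0 \<le> f s \<and> f s \<le> 1"
    and "q \<le> 1"
    and cross: "\<And>s t. s \<in> C \<Longrightarrow> t \<in> C \<Longrightarrow> q * a s * b t \<le> b s * a t"
  shows "weighted_mean C a f - weighted_mean C b f \<le> 1 - q"
proof -
  have ratio: "q * a s / sum a C \<le> b s / sum b C" if "s \<in> C" for s
  proof -
    have "q * a s * sum b C = (\<Sum>t\<in>C. q * a s * b t)" by (simp add: sum_distrib_left)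
    also have "\<dots> \<le> (\<Sum>t\<in>C. b s * a t)" by (rule sum_mono) (use cross that in auto)
    also have "\<dots> = b s * sum a C" by (simp add: sum_distrib_left)
    finally show ?thesis using assms(3,4) by (simp add: field_simps)
  qed
  have mean_a_le_1: "weighted_mean C a f \<le> 1"
  proof -
    have "(\<Sum>s\<in>C. a s * f s) \<le> sum a C"
      by (rule sum_mono) (use a_nonneg f_range in \<open>auto intro: mult_left_le\<close>)
    then show ?thesis unfolding weighted_mean_def using assms(3) by simp
  qed
  have "q * weighted_mean C a f = (\<Sum>s\<in>C. (q * a s / sum a C) * f s)"
    unfolding weighted_mean_def by (simp add: sum_distrib_left sum_divide_distrib mult_ac)
  also have "\<dots> \<le> (\<Sum>s\<in>C. (b s / sum b C) * f s)"
    by (rule sum_mono, rule mult_right_mono) (use ratio f_range in auto)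
  also have "\<dots> = weighted_mean C b f"
    unfolding weighted_mean_def by (simp add: sum_divide_distrib)
  finally have "q * weighted_mean C a f \<le> weighted_mean C b f" .
  moreover have "(1 - q) * weighted_mean C a f \<le> 1 - q"
    using mean_a_le_1 \<open>q \<le> 1\<close> by (simp add: mult_left_le)
  ultimately show ?thesis by (simp add: algebra_simps)
qed

lemma abs_weighted_mean_tilt_le:
  fixes a h f :: "'c \<Rightarrow> real" and q :: real
  assumes "finite C"
    and a_nonneg: "\<And>s. s \<in> C \<Longrightarrow> a s \<ge> 0" and h_nonneg: "\<And>s. s \<in> C \<Longrightarrow> h s \<ge> 0"
    and "sum a C > 0" and tilt_pos: "(\<Sum>s\<in>C. h s * a s) > 0"
    and f_range: "\<And>s. s \<in> C \<Longrightarrow> 0 \<le> f s \<and> f s \<le> 1"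
    and h_ratio: "\<And>s t. s \<in> C \<Longrightarrow> t \<in> C \<Longrightarrow> q * h t \<le> h s"
  shows "\<bar>weighted_mean C (\<lambda>s. h s * a s) f - weighted_mean C a f\<bar> \<le> 1 - q"
proof -
  obtain s where "s \<in> C" "h s * a s > 0"
    using tilt_pos by (meson not_le sum_nonpos)
  then have "h s > 0" using h_nonneg[OF \<open>s \<in> C\<close>] by (auto simp: zero_less_mult_iff)
  with h_ratio[OF \<open>s \<in> C\<close> \<open>s \<in> C\<close>] have "q \<le> 1" by simp
  have tilt_nonneg: "h s * a s \<ge> 0" if "s \<in> C" for s
    using that a_nonneg h_nonneg by simp
  have tilt_up: "q * a s * (h t * a t) \<le> (h s * a s) * a t" if "s \<in> C" "t \<in> C" for s t
    using mult_right_mono[OF h_ratio[OF that] mult_nonneg_nonneg[OF a_nonneg a_nonneg]] that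
    by (simp add: ac_simps)
  have tilt_down: "q * (h s * a s) * a t \<le> a s * (h t * a t)" if "s \<in> C" "t \<in> C" for s t
    using tilt_up[OF that(2,1)] by (simp add: ac_simps)
  show ?thesis
  proof (rule abs_leI)
    show "weighted_mean C (\<lambda>s. h s * a s) f - weighted_mean C a f \<le> 1 - q"
      by (rule weighted_mean_diff_le[OF \<open>finite C\<close> tilt_nonneg tilt_pos \<open>sum a C > 0\<close>
            f_range \<open>q \<le> 1\<close> tilt_down])
    show "- (weighted_mean C (\<lambda>s. h s * a s) f - weighted_mean C a f) \<le> 1 - q"
      using weighted_mean_diff_le[OF \<open>finite C\<close> a_nonneg \<open>sum a C > 0\<close> tilt_pos
            f_range \<open>q \<le> 1\<close> tilt_up]
      by simp
  qed
qed

lemma one_sub_min_inverse_power_le: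
  fixes r :: real
  assumes "r > 0"
  shows "1 - min r (1/r) ^ n \<le> real n * \<bar>r - 1\<bar>"
proof (cases "r \<le> 1")
  case True
  have "1 \<le> 1/r"
    using True assms by (simp add: le_divide_eq)
  with True have "min r (1/r) = r"
    by (intro min_absorb1) linarith
  moreover have "1 + real n * (r - 1) \<le> (1 + (r - 1)) ^ n"
    by (rule Bernoulli_inequality) (use assms in simp)
  ultimately show ?thesis using True by (simp add: algebra_simps)
next
  case False
  have "1/r < 1"
    using False assms by (simp add: divide_less_eq)
  with False have "min r (1/r) = 1/r"
    by (intro min_absorb2) linarith
  moreover have "1 + real n * (1/r - 1) \<le> (1 + (1/r - 1)) ^ n"
    by (rule Bernoulli_inequality) (use assms in simp)
  moreover have "1 - 1/r \<le> r - 1"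
  proof -
    have "1 - 1/r = (r - 1) / r" using assms by (simp add: field_simps)
    also have "\<dots> \<le> r - 1" using False by (simp add: divide_le_eq)
    finally show ?thesis .
  qed
  ultimately show ?thesis
    using False mult_left_mono[OF \<open>1 - 1/r \<le> r - 1\<close>, of "real n"] by (simp add: algebra_simps)
qed

lemma min_inverse_power_mult_le:
  fixes r :: real
  assumes "r > 0" and "k \<le> n" and "k' \<le> n"
  shows "min r (1/r) ^ n * r ^ k' \<le> r ^ k"
proof (cases "r \<le> 1")
  case True
  have "1 \<le> 1/r"
    using True assms by (simp add: le_divide_eq)
  with True have "min r (1/r) = r"
    by (intro min_absorb1) linarith
  moreover have "r ^ (n + k') \<le> r ^ k"
    by (rule power_decreasing) (use assms True in auto)
  ultimately show ?thesis by (simp add: power_add)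
next
  case False
  have "1/r < 1"
    using False assms by (simp add: divide_less_eq)
  with False have "min r (1/r) = 1/r"
    by (intro min_absorb2) linarith
  moreover have "r ^ k' \<le> r ^ (k + n)"
    by (rule power_increasing) (use assms False in auto)
  ultimately show ?thesis
    using assms by (simp add: power_add power_one_over divide_le_eq mult.commute)
qed

lemma finite_configs: "finite V \<Longrightarrow> finite (configs V)"
  unfolding configs_def by (simp add: finite_PiE)

lemma spin_weight_nonneg:
  assumes "\<beta> \<ge> 0" and "\<gamma> \<ge> 0" and "\<And>u. u \<in> V \<Longrightarrow> L u \<ge> 0"
  shows "spin_weight V E \<beta> \<gamma> L \<sigma> \<ge> 0"
  using assms unfolding spin_weight_def by (intro mult_nonneg_nonneg zero_le_power prod_nonneg) auto

lemma mono_edges_const: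
  assumes "graph V E" and "\<And>u. u \<in> V \<Longrightarrow> \<sigma> u = s" and "t \<noteq> s"
  shows "mono_edges E \<sigma> t = 0"
proof -
  have "e \<noteq> {} \<and> e \<subseteq> V" if "e \<in> E" for e
    using assms(1) that unfolding graph_def by fastforce
  then have "{e\<in>E. \<forall>u\<in>e. \<sigma> u = t} = {}"
    using assms(2,3) by fastforce
  then show ?thesis unfolding mono_edges_def by (simp only: card.empty)
qed

text \<open>The all-0 configuration has positive weight if \<open>\<beta> > 0\<close>, the all-1 configuration if
  \<open>\<gamma> > 0\<close>.\<close>
lemma partition_fn_pos:
  assumes "\<beta> \<ge> 0" and "\<gamma> \<ge> 0" and "\<beta> > 0 \<or> \<gamma> > 0"
    and "graph V E" and L_pos: "\<And>u. u \<in> V \<Longrightarrow> L u > 0"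
  shows "partition_fn V E \<beta> \<gamma> L > 0"
proof -
  have "finite V" using \<open>graph V E\<close> by (simp add: graph_def)
  obtain s :: nat where "s \<in> {0, 1}" and base_pos: "(if s = 0 then \<beta> else \<gamma>) > 0"
    using \<open>\<beta> > 0 \<or> \<gamma> > 0\<close> by (metis insertCI zero_neq_one)
  define \<sigma> where "\<sigma> = (\<lambda>u\<in>V. s)"
  have \<sigma>_config: "\<sigma> \<in> configs V"
    unfolding configs_def \<sigma>_def using \<open>s \<in> {0, 1}\<close> by auto
  have "spin_weight V E \<beta> \<gamma> L \<sigma> > 0"
  proof -
    have "mono_edges E \<sigma> (1 - s) = 0"
      by (rule mono_edges_const[OF \<open>graph V E\<close>, of _ s]) (use \<open>s \<in> {0, 1}\<close> in \<open>auto simp: \<sigma>_def\<close>)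
    moreover have "(\<Prod>v\<in>{v\<in>V. \<sigma> v = 1}. L v) > 0"
      using L_pos by (intro prod_pos) auto
    ultimately show ?thesis
      using \<open>s \<in> {0, 1}\<close> base_pos unfolding spin_weight_def by (auto split: if_splits)
  qed
  moreover have "spin_weight V E \<beta> \<gamma> L \<sigma>' \<ge> 0" for \<sigma>'
    using assms L_pos by (intro spin_weight_nonneg) (auto intro: less_imp_le)
  ultimately show ?thesis
    unfolding partition_fn_def
    using sum_pos2[OF finite_configs[OF \<open>finite V\<close>] \<sigma>_config] by blast
qed

lemma spin_expect_eq_weighted_mean:
  "spin_expect V E \<beta> \<gamma> L v
     = weighted_mean (configs V) (spin_weight V E \<beta> \<gamma> L) (\<lambda>\<sigma>. real (\<sigma> v))"
  unfolding spin_expect_def gibbs_def partition_fn_def weighted_mean_def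
  by (simp add: sum_divide_distrib)

lemma spin_weight_scale_field:
  assumes "finite V" and "\<And>u. u \<in> V \<Longrightarrow> L' u = (if u \<in> S then r * L u else L u)"
  shows "spin_weight V E \<beta> \<gamma> L' \<sigma>
           = r ^ card ({u\<in>V. \<sigma> u = 1} \<inter> S) * spin_weight V E \<beta> \<gamma> L \<sigma>"
proof -
  define A where "A = {u\<in>V. \<sigma> u = 1}"
  have "finite A" unfolding A_def using assms(1) by simp
  have "(\<Prod>u\<in>A. L' u) = (\<Prod>u\<in>A. (if u \<in> S then r else 1) * L u)"
    by (rule prod.cong) (use assms(2) in \<open>auto simp: A_def\<close>)
  also have "\<dots> = (\<Prod>u\<in>A. if u \<in> S then r else 1) * (\<Prod>u\<in>A. L u)"
    by (rule prod.distrib)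
  also have "(\<Prod>u\<in>A. if u \<in> S then r else 1) = r ^ card (A \<inter> S)"
    using prod.inter_restrict[OF \<open>finite A\<close>, of "\<lambda>_. r" S] by simp
  finally show ?thesis unfolding spin_weight_def A_def by (simp add: ac_simps)
qed

lemma abs_spin_expect_scale_field_le:
  assumes "\<beta> \<ge> 0" and "\<gamma> \<ge> 0" and "\<beta> > 0 \<or> \<gamma> > 0"
    and "graph V E" and "S \<subseteq> V" and "v \<in> V" and "r > 0"
    and L_pos: "\<And>u. u \<in> V \<Longrightarrow> L u > 0"
    and L': "\<And>u. u \<in> V \<Longrightarrow> L' u = (if u \<in> S then r * L u else L u)"
  shows "\<bar>spin_expect V E \<beta> \<gamma> L' v - spin_expect V E \<beta> \<gamma> L v\<bar> \<le> 1 - min r (1/r) ^ card S"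
proof -
  define h where "h = (\<lambda>\<sigma> :: 'a \<Rightarrow> nat. r ^ card ({u\<in>V. \<sigma> u = 1} \<inter> S))"
  have "finite V" using \<open>graph V E\<close> by (simp add: graph_def)
  then have "finite S" using \<open>S \<subseteq> V\<close> by (rule finite_subset[rotated])
  have L'_pos: "\<And>u. u \<in> V \<Longrightarrow> L' u > 0"
    using L_pos L' \<open>r > 0\<close> by simp
  have weight': "spin_weight V E \<beta> \<gamma> L' = (\<lambda>\<sigma>. h \<sigma> * spin_weight V E \<beta> \<gamma> L \<sigma>)"
    unfolding h_def by (intro ext spin_weight_scale_field[OF \<open>finite V\<close> L'])
  show ?thesis
    unfolding spin_expect_eq_weighted_mean weight'
  proof (rule abs_weighted_mean_tilt_le[OF finite_configs[OF \<open>finite V\<close>]])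
    show "0 \<le> spin_weight V E \<beta> \<gamma> L \<sigma>" for \<sigma>
      using assms L_pos by (intro spin_weight_nonneg) (auto intro: less_imp_le)
    have "partition_fn V E \<beta> \<gamma> L > 0" "partition_fn V E \<beta> \<gamma> L' > 0"
      using partition_fn_pos[OF assms(1-4)] L_pos L'_pos by blast+
    then show "0 < sum (spin_weight V E \<beta> \<gamma> L) (configs V)"
      and "0 < (\<Sum>\<sigma>\<in>configs V. h \<sigma> * spin_weight V E \<beta> \<gamma> L \<sigma>)"
      unfolding partition_fn_def weight' .
    show "0 \<le> h \<sigma>" for \<sigma>
      unfolding h_def using \<open>r > 0\<close> by simp
    show "0 \<le> real (\<sigma> v) \<and> real (\<sigma> v) \<le> 1" if "\<sigma> \<in> configs V" for \<sigma>
      using PiE_mem[OF that[unfolded configs_def] \<open>v \<in> V\<close>] by auto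
    show "min r (1/r) ^ card S * h \<tau> \<le> h \<sigma>" for \<sigma> \<tau>
      unfolding h_def
      by (rule min_inverse_power_mult_le[OF \<open>r > 0\<close>]) (use \<open>finite S\<close> in \<open>auto intro: card_mono\<close>)
  qed
qed

theorem lemma5p2:
  fixes V :: "'a set" and E :: "'a set set" and S :: "'a set"
    and \<beta> \<gamma> lam lam1 lam2 :: real and v :: 'a
  assumes "antiferro \<beta> \<gamma>"
    and "lam > 0" and "lam1 > 0" and "lam2 > 0"
    and "graph V E" and "S \<subseteq> V" and "v \<in> V"
  shows "\<bar>spin_expect V E \<beta> \<gamma> (\<lambda>u. if u \<in> S then lam2 else lam) v
          - spin_expect V E \<beta> \<gamma> (\<lambda>u. if u \<in> S then lam1 else lam) v\<bar>
         \<le> 2 * real (card S) * \<bar>lam2 / lam1 - 1\<bar>"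
proof -
  define r where "r = lam2 / lam1"
  have "r > 0" unfolding r_def using assms by simp
  have "\<bar>spin_expect V E \<beta> \<gamma> (\<lambda>u. if u \<in> S then lam2 else lam) v
          - spin_expect V E \<beta> \<gamma> (\<lambda>u. if u \<in> S then lam1 else lam) v\<bar>
        \<le> 1 - min r (1/r) ^ card S"
    by (intro abs_spin_expect_scale_field_le \<open>graph V E\<close> \<open>S \<subseteq> V\<close> \<open>v \<in> V\<close> \<open>r > 0\<close>)
      (use assms in \<open>auto simp: antiferro_def r_def\<close>)
  also have "\<dots> \<le> real (card S) * \<bar>r - 1\<bar>"
    by (rule one_sub_min_inverse_power_le[OF \<open>r > 0\<close>])
  also have "\<dots> \<le> 2 * real (card S) * \<bar>r - 1\<bar>"
    by simp
  finally show ?thesis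
    unfolding r_def .
qed

end
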